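(* Let $r\ge 0$ be a fixed integer. There is a constant $C>0$ (depending only on $r$) such that every $r$-cross-free hypergraph $H$ on $n$ vertices has at most $C n^{r+1}$ hyperedges (i.e. $\mathcal O(n^{r+1})$ hyperedges).
   Context: Hypergraphs have vertex set $V=[n]$ and are identified with their sets of hyperedges; $\overline A = V\setminus A$. $\mathcal K_r(n)$ is the class of hypergraphs $\mathcal E$ on $V$ satisfying: (R0) every $X\subseteq V$ with $|X|\le r$ is in $\mathcal E$; (R1) $A\in\mathcal E\Rightarrow V\setminus A\in\mathcal E$; (R2) $A,B\in\mathcal E$ and $|A\cap B|\ge r\Rightarrow A\cup B\in\mathcal E$. $\mathcal K^0_r(n)$ is the class of hypergraphs satisfying (R0) and (R1) only. For a hypergraph $H$ on $V$, $\mathrm{cl}_r(H)$ (resp. $\mathrm{cl}^0_r(H)$) is the intersection of all hypergraphs in $\mathcal K_r(n)$ (resp. $\mathcal K^0_r(n)$) containing $H$. Two sets $A,B\subseteq V$ are $r$-orthogonal if $\mathrm{cl}_r(\{A,B\})=\mathrm{cl}^0_r(\{A,B\})$, where $\{A,B\}$ is the hypergraph on $V$ with hyperedges $A$ and $B$. A hypergraph is $r$-cross-free if every pair of its hyperedges is $r$-orthogonal. *)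

theory Defs
  imports Complex_Main
begin

definition vset :: "nat \<Rightarrow> nat set" where
  "vset n = {1..n}"

definition K0 :: "nat \<Rightarrow> nat \<Rightarrow> nat set set set" where
  "K0 r n = {E. E \<subseteq> Pow (vset n)
      \<and> (\<forall>X. X \<subseteq> vset n \<and> card X \<le> r \<longrightarrow> X \<in> E)
      \<and> (\<forall>A\<in>E. vset n - A \<in> E)}"

definition K :: "nat \<Rightarrow> nat \<Rightarrow> nat set set set" where
  "K r n = {E. E \<in> K0 r n
      \<and> (\<forall>A\<in>E. \<forall>B\<in>E. card (A \<inter> B) \<ge> r \<longrightarrow> A \<union> B \<in> E)}"

definition cl :: "nat \<Rightarrow> nat \<Rightarrow> nat set set \<Rightarrow> nat set set" where
  "cl r n H = \<Inter> {E \<in> K r n. H \<subseteq> E}"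

definition cl0 :: "nat \<Rightarrow> nat \<Rightarrow> nat set set \<Rightarrow> nat set set" where
  "cl0 r n H = \<Inter> {E \<in> K0 r n. H \<subseteq> E}"

definition r_orthogonal :: "nat \<Rightarrow> nat \<Rightarrow> nat set \<Rightarrow> nat set \<Rightarrow> bool" where
  "r_orthogonal r n A B \<longleftrightarrow> cl r n {A, B} = cl0 r n {A, B}"

definition r_cross_free :: "nat \<Rightarrow> nat \<Rightarrow> nat set set \<Rightarrow> bool" where
  "r_cross_free r n H \<longleftrightarrow> (\<forall>A\<in>H. \<forall>B\<in>H. r_orthogonal r n A B)"

end

theory Submission
  imports Defs
begin

text \<open>
  Replace every hyperedge by whichever of it and its complement has at most n/2 elements.
  The sides with at most r elements number at most the sum of the binomials C(n, j), j \<le> r.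
  For the remaining sides P, Q with |P \<inter> Q| > r, orthogonality of their hyperedges puts
  P \<union> Q into cl0 of the pair, i.e. it is small, co-small or one of the four sides; the
  size constraints leave only P \<union> Q \<in> {P, Q}, so P and Q are nested. Families of sets of
  size > r in which any two sets meeting in more than r points are nested have at most
  2 C(n, r + 1) members, by induction on n, deleting one point.
\<close>

definition k_laminar :: "nat \<Rightarrow> 'a set set \<Rightarrow> bool" where
  "k_laminar k L \<longleftrightarrow> (\<forall>P\<in>L. k \<le> card P) \<and>
     (\<forall>P\<in>L. \<forall>Q\<in>L. k \<le> card (P \<inter> Q) \<longrightarrow> P \<subseteq> Q \<or> Q \<subseteq> P)"

lemma card_le_choose_if_small_intersections:
  assumes "finite F" "L \<subseteq> Pow F"
    and large: "\<And>A. A \<in> L \<Longrightarrow> k \<le> card A"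
    and small_meet: "\<And>A B. A \<in> L \<Longrightarrow> B \<in> L \<Longrightarrow> k \<le> card (A \<inter> B) \<Longrightarrow> A = B"
  shows "card L \<le> card F choose k"
proof -
  have "\<forall>A\<in>L. \<exists>S. S \<subseteq> A \<and> card S = k"
    by (meson large obtain_subset_with_card_n)
  then obtain g where g: "\<And>A. A \<in> L \<Longrightarrow> g A \<subseteq> A \<and> card (g A) = k"
    by (metis (no_types) bchoice)
  have "inj_on g L"
  proof (rule inj_onI)
    fix A B assume A: "A \<in> L" and B: "B \<in> L" and "g A = g B"
    then have "g A \<subseteq> A \<inter> B" using g by blast
    moreover have "finite (A \<inter> B)" using A assms(1,2) by (blast intro: finite_subset)
    ultimately have "k \<le> card (A \<inter> B)" using g[OF A] card_mono by metis
    then show "A = B" using small_meet A B by blast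
  qed
  moreover have "g ` L \<subseteq> {S. S \<subseteq> F \<and> card S = k}" using g assms(2) by blast
  ultimately have "card L \<le> card {S. S \<subseteq> F \<and> card S = k}"
    using assms(1) by (intro card_inj_on_le) auto
  then show ?thesis using n_subsets[OF assms(1)] by simp
qed

lemma card_Suc_sets_through_le_choose:
  assumes "finite F" "x \<notin> F" "L \<subseteq> Pow (insert x F)" "\<And>P. P \<in> L \<Longrightarrow> Suc k \<le> card P"
  shows "card {P\<in>L. card (P - {x}) \<le> k} \<le> card F choose k"
proof -
  have "{P\<in>L. card (P - {x}) \<le> k} \<subseteq> insert x ` {S. S \<subseteq> F \<and> card S = k}"
  proof
    fix P assume "P \<in> {P\<in>L. card (P - {x}) \<le> k}"
    then have P: "P \<in> L" "card (P - {x}) \<le> k" by simp_all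
    then have "finite P" using assms(1,3) by (blast intro: finite_subset)
    have "x \<in> P"
    proof (rule ccontr)
      assume "x \<notin> P"
      then show False using P assms(4)[of P] by simp
    qed
    then have "card (P - {x}) = card P - 1" using \<open>finite P\<close> by simp
    then have "card (P - {x}) = k" using P assms(4)[of P] by linarith
    moreover have "P - {x} \<subseteq> F" "P = insert x (P - {x})" using P \<open>x \<in> P\<close> assms(3) by auto
    ultimately show "P \<in> insert x ` {S. S \<subseteq> F \<and> card S = k}" by blast
  qed
  then have "card {P\<in>L. card (P - {x}) \<le> k} \<le> card (insert x ` {S. S \<subseteq> F \<and> card S = k})"
    using assms(1) by (intro card_mono) auto
  also have "\<dots> \<le> card {S. S \<subseteq> F \<and> card S = k}"
    using assms(1) by (intro card_image_le) simp
  also have "\<dots> = card F choose k" using n_subsets[OF assms(1)] .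
  finally show ?thesis .
qed

lemma card_le_card_image_Diff_singleton:
  assumes "finite L"
  shows "card L \<le> card ((\<lambda>P. P - {x}) ` L) + card {Q\<in>L. x \<in> Q \<and> Q - {x} \<in> L}"
proof -
  define D where "D = {Q\<in>L. x \<in> Q \<and> Q - {x} \<in> L}"
  have "D \<subseteq> L" unfolding D_def by blast
  have in_D: "R \<in> D" if "R \<in> L" "S \<in> L" "x \<in> R" "x \<notin> S" "R - {x} = S - {x}" for R S
  proof -
    have "S = R - {x}" using that(4,5) by blast
    then show ?thesis using that(1-3) by (simp add: D_def)
  qed
  have "inj_on (\<lambda>P. P - {x}) (L - D)"
  proof (rule inj_onI)
    fix P Q assume P: "P \<in> L - D" and Q: "Q \<in> L - D" and eq: "P - {x} = Q - {x}"
    then have "x \<in> P \<longleftrightarrow> x \<in> Q" using in_D[of P Q] in_D[of Q P] by blast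
    then show "P = Q" using eq by blast
  qed
  then have "card (L - D) = card ((\<lambda>P. P - {x}) ` (L - D))" by (simp add: card_image)
  also have "\<dots> \<le> card ((\<lambda>P. P - {x}) ` L)" using assms by (intro card_mono) auto
  finally have "card (L - D) \<le> card ((\<lambda>P. P - {x}) ` L)" .
  moreover have "card L \<le> card (L - D) + card D"
    using card_Un_le[of "L - D" D] \<open>D \<subseteq> L\<close> by (simp add: Un_absorb2)
  ultimately show ?thesis unfolding D_def by linarith
qed

lemma k_laminar_Diff_singleton:
  assumes "k_laminar k L"
  shows "k_laminar k ((\<lambda>P. P - {x}) ` {P\<in>L. k \<le> card (P - {x})})"
    (is "k_laminar k ?L'")
proof -
  have "P' \<subseteq> Q' \<or> Q' \<subseteq> P'"
    if "P' \<in> ?L'" "Q' \<in> ?L'" and meet: "k \<le> card (P' \<inter> Q')" for P' Q'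
  proof -
    obtain P where P: "P \<in> L" "P' = P - {x}" using \<open>P' \<in> ?L'\<close> by blast
    obtain Q where Q: "Q \<in> L" "Q' = Q - {x}" using \<open>Q' \<in> ?L'\<close> by blast
    have "P' \<inter> Q' = (P \<inter> Q) - {x}" unfolding P(2) Q(2) by blast
    then have "k \<le> card ((P \<inter> Q) - {x})" using meet by simp
    then have "k \<le> card (P \<inter> Q)" using card_Diff1_le[of "P \<inter> Q" x] by linarith
    then have "P \<subseteq> Q \<or> Q \<subseteq> P" using assms P(1) Q(1) by (simp add: k_laminar_def)
    then show ?thesis unfolding P(2) Q(2) by blast
  qed
  moreover have "k \<le> card P'" if "P' \<in> ?L'" for P' using that by auto
  ultimately show ?thesis unfolding k_laminar_def by blast
qed

lemma card_k_laminar_link_le: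
  assumes "finite F" "x \<notin> F" "L \<subseteq> Pow (insert x F)" "k_laminar (Suc k) L"
  shows "card {A\<in>L. x \<notin> A \<and> insert x A \<in> L} \<le> card F choose k"
proof (rule card_le_choose_if_small_intersections[OF assms(1)])
  let ?D = "{A\<in>L. x \<notin> A \<and> insert x A \<in> L}"
  have nested: "P \<subseteq> Q \<or> Q \<subseteq> P" if "P \<in> L" "Q \<in> L" "Suc k \<le> card (P \<inter> Q)" for P Q
    using assms(4) that by (auto simp: k_laminar_def)
  have large: "Suc k \<le> card P" if "P \<in> L" for P
    using assms(4) that by (auto simp: k_laminar_def)
  show "?D \<subseteq> Pow F" using assms(3) by blast
  show "k \<le> card A" if "A \<in> ?D" for A using large that by fastforce
  have absorb: "A = B" if A: "A \<in> ?D" and B: "B \<in> ?D" and sub: "insert x A \<subseteq> insert x B" for A B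
  proof -
    have "A \<subseteq> B" using sub A by blast
    then have "insert x A \<inter> B = A" using B by blast
    then have "B \<subseteq> insert x A" using nested[of "insert x A" B] large[of A] A B by auto
    then show "A = B" using \<open>A \<subseteq> B\<close> B by blast
  qed
  show "A = B" if A: "A \<in> ?D" and B: "B \<in> ?D" and meet: "k \<le> card (A \<inter> B)" for A B
  proof -
    have "finite (A \<inter> B)" using A assms(1,3) by (blast intro: finite_subset)
    moreover have "insert x A \<inter> insert x B = insert x (A \<inter> B)" by blast
    ultimately have "Suc k \<le> card (insert x A \<inter> insert x B)" using A meet by simp
    then have "insert x A \<subseteq> insert x B \<or> insert x B \<subseteq> insert x A"
      using nested A B by blast
    then show "A = B" using absorb A B by blast
  qed
qed

lemma card_doubled_members_eq:
  "card {Q\<in>L. x \<in> Q \<and> Q - {x} \<in> L} = card {A\<in>L. x \<notin> A \<and> insert x A \<in> L}"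
proof -
  have "{Q\<in>L. x \<in> Q \<and> Q - {x} \<in> L} = insert x ` {A\<in>L. x \<notin> A \<and> insert x A \<in> L}"
  proof (intro equalityI subsetI)
    fix Q assume "Q \<in> {Q\<in>L. x \<in> Q \<and> Q - {x} \<in> L}"
    then have "Q - {x} \<in> {A\<in>L. x \<notin> A \<and> insert x A \<in> L}" "Q = insert x (Q - {x})"
      by (auto simp: insert_absorb)
    then show "Q \<in> insert x ` {A\<in>L. x \<notin> A \<and> insert x A \<in> L}" by blast
  qed auto
  moreover have "inj_on (insert x) {A\<in>L. x \<notin> A \<and> insert x A \<in> L}"
    by (rule inj_onI) (simp add: insert_ident)
  ultimately show ?thesis by (simp add: card_image)
qed

theorem card_k_laminar_le:
  assumes "finite U" "L \<subseteq> Pow U" "k_laminar (Suc k) L"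
  shows "card L \<le> 2 * (card U choose Suc k)"
  using assms
proof (induction U arbitrary: L rule: finite_induct)
  case empty
  then have "L \<subseteq> {{}}" by blast
  moreover have "{} \<notin> L" using empty.prems(2) by (auto simp: k_laminar_def)
  ultimately have "L = {}" by blast
  then show ?case by simp
next
  case (insert x F)
  txt \<open>Deleting x maps the members L1 that stay large to a k-laminar family on F, injectively
    up to the pairs Q, Q - {x} both in L; the remaining members have exactly k + 1 elements and
    contain x. Pascal's rule then closes the induction.\<close>
  define L1 where "L1 = {P\<in>L. Suc k \<le> card (P - {x})}"
  have "finite L" using insert.prems(1) insert.hyps(1) by (simp add: finite_subset)
  then have "finite L1" by (simp add: L1_def)
  have "L = L1 \<union> {P\<in>L. card (P - {x}) \<le> k}" by (auto simp: L1_def)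
  then have "card L \<le> card L1 + card {P\<in>L. card (P - {x}) \<le> k}" by (metis card_Un_le)
  also have "card L1 \<le> card ((\<lambda>P. P - {x}) ` L1) + card {Q\<in>L1. x \<in> Q \<and> Q - {x} \<in> L1}"
    using card_le_card_image_Diff_singleton[OF \<open>finite L1\<close>] .
  also have "card ((\<lambda>P. P - {x}) ` L1) \<le> 2 * (card F choose Suc k)"
  proof (rule insert.IH)
    show "(\<lambda>P. P - {x}) ` L1 \<subseteq> Pow F" using insert.prems(1) by (auto simp: L1_def)
    show "k_laminar (Suc k) ((\<lambda>P. P - {x}) ` L1)"
      unfolding L1_def by (rule k_laminar_Diff_singleton[OF insert.prems(2)])
  qed
  also have "card {Q\<in>L1. x \<in> Q \<and> Q - {x} \<in> L1} \<le> card {Q\<in>L. x \<in> Q \<and> Q - {x} \<in> L}"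
    using \<open>finite L\<close> by (intro card_mono) (auto simp: L1_def)
  also have "\<dots> \<le> card F choose k"
    using card_k_laminar_link_le[OF insert.hyps(1,2) insert.prems] card_doubled_members_eq[of L x]
    by simp
  also have "card {P\<in>L. card (P - {x}) \<le> k} \<le> card F choose k"
    using insert.prems insert.hyps by (intro card_Suc_sets_through_le_choose) (auto simp: k_laminar_def)
  finally show ?case using insert.hyps by simp
qed

lemma card_subsets_card_le:
  assumes "finite V"
  shows "card {X. X \<subseteq> V \<and> card X \<le> k} = (\<Sum>j\<le>k. card V choose j)"
proof -
  have "{X. X \<subseteq> V \<and> card X \<le> k} = (\<Union>j\<le>k. {X. X \<subseteq> V \<and> card X = j})" by auto
  then have "card {X. X \<subseteq> V \<and> card X \<le> k} = (\<Sum>j\<le>k. card {X. X \<subseteq> V \<and> card X = j})"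
    using assms by (simp only:) (rule card_UN_disjoint, auto)
  also have "\<dots> = (\<Sum>j\<le>k. card V choose j)" using n_subsets[OF assms] by simp
  finally show ?thesis .
qed

lemma sum_choose_le_pow:
  assumes "1 \<le> n"
  shows "(\<Sum>j\<le>k. n choose j) \<le> Suc k * n ^ k"
proof -
  have "n choose j \<le> n ^ k" if "j \<le> k" for j
  proof (cases "j \<le> n")
    case True
    then have "n choose j \<le> n ^ j" by (rule binomial_le_pow)
    also have "\<dots> \<le> n ^ k" using that assms by (rule power_increasing)
    finally show ?thesis .
  next
    case False
    then show ?thesis by (simp add: binomial_eq_0)
  qed
  then have "(\<Sum>j\<le>k. n choose j) \<le> (\<Sum>j\<le>k. n ^ k)" by (intro sum_mono) simp
  then show ?thesis by simp
qed

lemma finite_vset [simp]: "finite (vset n)" and card_vset [simp]: "card (vset n) = n"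
  by (simp_all add: vset_def)

lemma subset_cl: "H \<subseteq> cl r n H"
  unfolding cl_def by blast

lemma cl_Diff:
  assumes "A \<in> cl r n H"
  shows "vset n - A \<in> cl r n H"
  unfolding cl_def
proof (rule InterI)
  fix E assume E: "E \<in> {E \<in> K r n. H \<subseteq> E}"
  then have "A \<in> E" using assms unfolding cl_def by blast
  moreover have "E \<in> K0 r n" using E by (simp add: K_def)
  ultimately show "vset n - A \<in> E" by (simp add: K0_def)
qed

lemma cl_Un:
  assumes "A \<in> cl r n H" "B \<in> cl r n H" "r \<le> card (A \<inter> B)"
  shows "A \<union> B \<in> cl r n H"
  unfolding cl_def
proof (rule InterI)
  fix E assume E: "E \<in> {E \<in> K r n. H \<subseteq> E}"
  then have "A \<in> E" "B \<in> E" using assms(1,2) unfolding cl_def by blast+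
  moreover have "E \<in> K r n" using E by simp
  ultimately show "A \<union> B \<in> E" using assms(3) by (simp add: K_def)
qed

lemma cl0_pair_subset:
  assumes "A \<subseteq> vset n" "B \<subseteq> vset n"
  shows "cl0 r n {A, B} \<subseteq> {X. X \<subseteq> vset n \<and> (card X \<le> r \<or> card (vset n - X) \<le> r)}
    \<union> {A, vset n - A, B, vset n - B}" (is "_ \<subseteq> ?E")
proof -
  define E where "E = ?E"
  have double_compl: "vset n - (vset n - Y) = Y" if "Y \<subseteq> vset n" for Y
    using that by blast
  have compl: "vset n - X \<in> E" if X: "X \<in> E" for X
  proof -
    consider "X \<subseteq> vset n" "card X \<le> r" | "card (vset n - X) \<le> r" | "X \<in> {A, vset n - A, B, vset n - B}"
      using X unfolding E_def by blast
    then show ?thesis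
    proof cases
      case 1
      then show ?thesis using double_compl unfolding E_def by auto
    next
      case 2
      then show ?thesis unfolding E_def by blast
    next
      case 3
      then show ?thesis using assms double_compl unfolding E_def by auto
    qed
  qed
  have "E \<subseteq> Pow (vset n)" using assms unfolding E_def by blast
  moreover have "X \<in> E" if "X \<subseteq> vset n" "card X \<le> r" for X using that unfolding E_def by blast
  ultimately have "E \<in> K0 r n" using compl unfolding K0_def by blast
  moreover have "{A, B} \<subseteq> E" unfolding E_def by blast
  ultimately show ?thesis unfolding cl0_def E_def[symmetric] by (intro Inter_lower) blast
qed

lemma r_orthogonal_Un_cases:
  assumes "A \<subseteq> vset n" "B \<subseteq> vset n" "r_orthogonal r n A B"
    and "P \<in> {A, vset n - A}" "Q \<in> {B, vset n - B}" "r \<le> card (P \<inter> Q)"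
  shows "card (P \<union> Q) \<le> r \<or> card (vset n - (P \<union> Q)) \<le> r \<or>
    P \<union> Q \<in> {A, vset n - A} \<union> {B, vset n - B}"
proof -
  have "P \<in> cl r n {A, B}" "Q \<in> cl r n {A, B}"
    using subset_cl[of "{A, B}"] cl_Diff[of A] cl_Diff[of B] assms(4,5) by auto
  then have "P \<union> Q \<in> cl r n {A, B}" using cl_Un assms(6) by blast
  then have "P \<union> Q \<in> cl0 r n {A, B}" using assms(3) by (simp add: r_orthogonal_def)
  then show ?thesis using cl0_pair_subset[OF assms(1,2)] by blast
qed

definition small_sides :: "nat \<Rightarrow> nat set set \<Rightarrow> nat set set" where
  "small_sides n H = {P \<in> H \<union> (\<lambda>A. vset n - A) ` H. 2 * card P \<le> n}"

lemma pair_compl_eq: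
  assumes "A \<subseteq> V" "P \<in> {A, V - A}"
  shows "{A, V - A} = {P, V - P}"
proof -
  have "V - (V - A) = A" using assms(1) by blast
  then show ?thesis using assms(2) by auto
qed

lemma r_cross_free_k_laminar:
  assumes "H \<subseteq> Pow (vset n)" "r_cross_free r n H"
  shows "k_laminar (Suc r) {P \<in> small_sides n H. Suc r \<le> card P}"
proof -
  have "P \<subseteq> Q \<or> Q \<subseteq> P"
    if P: "P \<in> small_sides n H" "Suc r \<le> card P" and Q: "Q \<in> small_sides n H" "Suc r \<le> card Q"
      and meet: "Suc r \<le> card (P \<inter> Q)" for P Q
  proof -
    obtain A where A: "A \<in> H" "P \<in> {A, vset n - A}" using P(1) unfolding small_sides_def by blast
    obtain B where B: "B \<in> H" "Q \<in> {B, vset n - B}" using Q(1) unfolding small_sides_def by blast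
    have AB: "A \<subseteq> vset n" "B \<subseteq> vset n" using A(1) B(1) assms(1) by blast+
    then have "P \<subseteq> vset n" "Q \<subseteq> vset n" using A(2) B(2) by blast+
    then have fin: "finite P" "finite Q" using finite_subset finite_vset by blast+
    have "2 * card P \<le> n" "2 * card Q \<le> n" using P(1) Q(1) by (simp_all add: small_sides_def)
    moreover have "card P + card Q = card (P \<union> Q) + card (P \<inter> Q)" by (rule card_Un_Int[OF fin])
    moreover have "card (vset n - (P \<union> Q)) = n - card (P \<union> Q)"
      using \<open>P \<subseteq> vset n\<close> \<open>Q \<subseteq> vset n\<close> fin by (simp add: card_Diff_subset)
    moreover have "card P \<le> card (P \<union> Q)" using fin by (simp add: card_mono)
    ultimately have large: "\<not> card (P \<union> Q) \<le> r" "\<not> card (vset n - (P \<union> Q)) \<le> r"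
      using P(2) meet by linarith+
    have orth: "r_orthogonal r n A B" using assms(2) A(1) B(1) by (simp add: r_cross_free_def)
    have "r \<le> card (P \<inter> Q)" using meet by simp
    then have "P \<union> Q \<in> {A, vset n - A} \<union> {B, vset n - B}"
      using r_orthogonal_Un_cases[OF AB orth A(2) B(2)] large by blast
    then have "P \<union> Q \<in> {P, vset n - P} \<union> {Q, vset n - Q}"
      by (simp only: pair_compl_eq[OF AB(1) A(2)] pair_compl_eq[OF AB(2) B(2)])
    moreover have "P \<noteq> {}" "Q \<noteq> {}" using P(2) Q(2) by auto
    ultimately show ?thesis by blast
  qed
  then show ?thesis by (auto simp: k_laminar_def)
qed

lemma small_sides_subset_Pow: "H \<subseteq> Pow (vset n) \<Longrightarrow> small_sides n H \<subseteq> Pow (vset n)"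
  unfolding small_sides_def by blast

lemma card_le_twice_small_sides:
  assumes "H \<subseteq> Pow (vset n)"
  shows "card H \<le> 2 * card (small_sides n H)"
proof -
  let ?S = "small_sides n H"
  have "H \<subseteq> ?S \<union> (\<lambda>A. vset n - A) ` ?S"
  proof
    fix A assume A: "A \<in> H"
    then have "A \<subseteq> vset n" using assms by blast
    then have "card A \<le> n" "finite A" using card_mono[of "vset n" A] finite_subset[of A "vset n"] by auto
    then have "card A + card (vset n - A) = n" using \<open>A \<subseteq> vset n\<close> by (simp add: card_Diff_subset)
    then consider "2 * card A \<le> n" | "2 * card (vset n - A) \<le> n" by linarith
    then show "A \<in> ?S \<union> (\<lambda>A. vset n - A) ` ?S"
    proof cases
      case 1
      then show ?thesis using A by (simp add: small_sides_def)
    next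
      case 2
      then have "vset n - A \<in> ?S" using A by (simp add: small_sides_def)
      moreover have "A = vset n - (vset n - A)" using \<open>A \<subseteq> vset n\<close> by blast
      ultimately show ?thesis by blast
    qed
  qed
  moreover have "finite ?S"
    using small_sides_subset_Pow[OF assms] by (rule finite_subset) simp
  ultimately have "card H \<le> card (?S \<union> (\<lambda>A. vset n - A) ` ?S)" by (intro card_mono) auto
  also have "\<dots> \<le> card ?S + card ((\<lambda>A. vset n - A) ` ?S)" by (rule card_Un_le)
  also have "\<dots> \<le> 2 * card ?S" using card_image_le[OF \<open>finite ?S\<close>] by simp
  finally show ?thesis .
qed

lemma card_small_sides_le:
  assumes H: "H \<subseteq> Pow (vset n)" and cross_free: "r_cross_free r n H"
  shows "card (small_sides n H) \<le> 2 * (\<Sum>j\<le>Suc r. n choose j)"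
proof -
  let ?S = "small_sides n H"
  let ?G = "{P \<in> ?S. Suc r \<le> card P}"
  have S_Pow: "?S \<subseteq> Pow (vset n)" by (rule small_sides_subset_Pow[OF H])
  then have "finite ?S" by (rule finite_subset) simp
  have "?S \<subseteq> {X. X \<subseteq> vset n \<and> card X \<le> r} \<union> ?G"
    using S_Pow by (auto simp: not_less_eq_eq)
  then have "card ?S \<le> card ({X. X \<subseteq> vset n \<and> card X \<le> r} \<union> ?G)"
    using \<open>finite ?S\<close> by (intro card_mono) auto
  also have "\<dots> \<le> card {X. X \<subseteq> vset n \<and> card X \<le> r} + card ?G"
    by (rule card_Un_le)
  also have "card {X. X \<subseteq> vset n \<and> card X \<le> r} = (\<Sum>j\<le>r. n choose j)"
    using card_subsets_card_le[of "vset n" r] by simp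
  also have "card ?G \<le> 2 * (n choose Suc r)"
    using card_k_laminar_le[OF finite_vset _ r_cross_free_k_laminar[OF H cross_free]] S_Pow by auto
  also have "(\<Sum>j\<le>r. n choose j) + 2 * (n choose Suc r) \<le> 2 * (\<Sum>j\<le>Suc r. n choose j)"
    by simp
  finally show ?thesis by simp
qed

theorem theorem2:
  fixes r :: nat
  shows "\<exists>C::real. C > 0 \<and>
    (\<forall>n::nat. \<forall>H::nat set set. n \<ge> 1 \<longrightarrow> H \<subseteq> Pow (vset n) \<longrightarrow> r_cross_free r n H \<longrightarrow>
       real (card H) \<le> C * real n ^ (r + 1))"
proof (intro exI[of _ "4 * (real r + 2)"] conjI allI impI)
  fix n :: nat and H :: "nat set set"
  assume n: "n \<ge> 1" and H: "H \<subseteq> Pow (vset n)" and cross_free: "r_cross_free r n H"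
  have "card H \<le> 2 * card (small_sides n H)" by (rule card_le_twice_small_sides[OF H])
  also have "\<dots> \<le> 4 * (\<Sum>j\<le>Suc r. n choose j)" using card_small_sides_le[OF H cross_free] by simp
  also have "\<dots> \<le> 4 * ((r + 2) * n ^ (r + 1))" using sum_choose_le_pow[OF n, of "Suc r"] by simp
  finally have "real (card H) \<le> real (4 * ((r + 2) * n ^ (r + 1)))" by (simp only: of_nat_le_iff)
  then show "real (card H) \<le> 4 * (real r + 2) * real n ^ (r + 1)" by (simp add: algebra_simps)
qed simp

end
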